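(* Let $0< c\le 3$ and let $F$ be the distribution on $\{0,1\}$ with $\mathbb{P}(1)=c/3$. Then $BRev(F^3)/SRev(F^3) > 0.6$.
   Context: For i.i.d. values $X_1,\dots,X_k\sim F$ of an additive buyer: $SRev(F^k) = k\cdot\sup_{p\ge0} p\,\mathbb{P}(X_1\ge p)$ is the maximal revenue from selling each item separately at posted prices, and $BRev(F^k) = \sup_{p\ge 0} p\,\mathbb{P}(X_1+\dots+X_k\ge p)$ is the maximal revenue from selling all items as one bundle at a posted price. Here $k=3$. *)

theory Defs
  imports "HOL-Probability.Probability"
begin

definition SRev :: "nat \<Rightarrow> real pmf \<Rightarrow> real" where
  "SRev k F = real k * (SUP p\<in>{0..}. p * measure_pmf.prob F {x. x \<ge> p})"

definition sum_iid :: "nat \<Rightarrow> real pmf \<Rightarrow> real pmf" where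
  "sum_iid k F = map_pmf (\<lambda>f. \<Sum>i<k. f i) (Pi_pmf {..<k} 0 (\<lambda>_. F))"

definition BRev :: "nat \<Rightarrow> real pmf \<Rightarrow> real" where
  "BRev k F = (SUP p\<in>{0..}. p * measure_pmf.prob (sum_iid k F) {s. s \<ge> p})"

definition bern01 :: "real \<Rightarrow> real pmf" where
  "bern01 q = map_pmf (\<lambda>b. if b then 1 else 0) (bernoulli_pmf q)"

end

theory Submission imports Defs begin

text \<open>For values in {0,1} with P(1) = q the bundle of three items is a binomial variable.
  Selling items separately earns at most 3q (price 1), while the bundle earns
  1 - (1 - q)^3 at price 1 and 2 P(Bin(3,q) \<ge> 2) = 6q^2 - 4q^3 at price 2; the first
  exceeds 1.8q for q \<le> 9/20, the second for q \<ge> 9/20.\<close>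

lemma sum_iid_0: "sum_iid 0 F = return_pmf 0"
  unfolding sum_iid_def by simp

lemma sum_iid_Suc:
  "sum_iid (Suc k) F = map_pmf (\<lambda>(y, s). y + s) (pair_pmf F (sum_iid k F))"
proof -
  have "sum_iid (Suc k) F = map_pmf (\<lambda>f. \<Sum>i<Suc k. f i)
     (map_pmf (\<lambda>(y, f). f(k := y)) (pair_pmf F (Pi_pmf {..<k} 0 (\<lambda>_. F))))"
    unfolding sum_iid_def lessThan_Suc by (subst Pi_pmf_insert) auto
  also have "\<dots> = map_pmf (\<lambda>(y, s). y + s) (pair_pmf F (sum_iid k F))"
    unfolding sum_iid_def pair_map_pmf2 map_pmf_comp
    by (intro map_pmf_cong refl) (auto simp: sum.lessThan_Suc)
  finally show ?thesis .
qed

lemma sum_iid_bern01: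
  assumes "q \<in> {0..1}"
  shows "sum_iid k (bern01 q) = map_pmf real (binomial_pmf k q)"
proof (induction k)
  case 0
  show ?case
    using assms by (simp add: sum_iid_0 binomial_pmf_0)
next
  case (Suc k)
  show ?case
    unfolding sum_iid_Suc Suc binomial_pmf_Suc[OF assms]
    by (simp add: bern01_def map_pmf_def pair_pmf_def bind_assoc_pmf bind_return_pmf)
       (intro bind_pmf_cong refl, auto)
qed

lemma prob_bern01_ge:
  assumes "q \<in> {0..1}" "0 < p"
  shows "measure_pmf.prob (bern01 q) {x. p \<le> x} = (if p \<le> 1 then q else 0)"
proof -
  have "measure_pmf.prob (bern01 q) {x. p \<le> x}
      = measure_pmf.prob (bernoulli_pmf q) (if p \<le> 1 then {True} else {})"
    using assms by (auto simp: bern01_def vimage_def intro!: arg_cong[where f = "measure _"])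
  then show ?thesis
    using assms(1) by (simp add: measure_pmf_single)
qed

lemma SRev_bern01:
  assumes "q \<in> {0..1}"
  shows "SRev k (bern01 q) = real k * q"
proof -
  have rev_le: "p * measure_pmf.prob (bern01 q) {x. x \<ge> p} \<le> q" if "p \<ge> 0" for p
  proof (cases "p = 0")
    case False
    with that assms show ?thesis
      by (simp add: prob_bern01_ge mult_left_le_one_le)
  qed (use assms in simp)
  have "(SUP p\<in>{0..}. p * measure_pmf.prob (bern01 q) {x. x \<ge> p}) = q"
  proof (rule cSup_eq_maximum)
    show "q \<in> (\<lambda>p. p * measure_pmf.prob (bern01 q) {x. x \<ge> p}) ` {0..}"
      using prob_bern01_ge[OF assms, of 1] by (intro image_eqI[of _ _ 1]) simp_all
  qed (use rev_le in auto)
  then show ?thesis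
    by (simp add: SRev_def)
qed

lemma BRev_bern01_ge:
  assumes "q \<in> {0..1}" "0 \<le> p"
  shows "p * measure_pmf.prob (binomial_pmf k q) {j. p \<le> real j} \<le> BRev k (bern01 q)"
proof -
  let ?rev = "\<lambda>p. p * measure_pmf.prob (sum_iid k (bern01 q)) {s. s \<ge> p}"
  have rev: "?rev p = p * measure_pmf.prob (binomial_pmf k q) {j. p \<le> real j}" for p
    using assms by (simp add: sum_iid_bern01 vimage_def)
  have "?rev p \<le> real k" if "0 \<le> p" for p
  proof (cases "p \<le> real k")
    case True
    have "p * measure_pmf.prob (binomial_pmf k q) {j. p \<le> real j} \<le> p"
      using that by (intro mult_left_le) simp_all
    with True show ?thesis
      by (simp add: rev)
  next
    case False
    have "set_pmf (binomial_pmf k q) \<subseteq> {..k}"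
      using assms by (auto simp: set_pmf_binomial_eq split: if_splits)
    with False have "measure_pmf.prob (binomial_pmf k q) {j. p \<le> real j} = 0"
      by (subst measure_pmf_zero_iff) force
    then show ?thesis
      by (simp add: rev)
  qed
  then have "bdd_above (?rev ` {0..})"
    by (auto intro!: bdd_aboveI)
  then have "?rev p \<le> BRev k (bern01 q)"
    unfolding BRev_def using assms by (intro cSUP_upper) auto
  then show ?thesis
    by (simp add: rev)
qed

lemma prob_binomial_pos:
  assumes "q \<in> {0..1}"
  shows "measure_pmf.prob (binomial_pmf n q) {j. 1 \<le> j} = 1 - (1 - q) ^ n"
proof -
  have "{j. 1 \<le> j} = space (measure_pmf (binomial_pmf n q)) - {0}"
    by auto
  then show ?thesis
    using assms measure_pmf.prob_compl[of "{0}" "binomial_pmf n q"]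
    by (simp add: measure_pmf_single)
qed

lemma prob_binomial_3_ge_2:
  assumes "q \<in> {0..1}"
  shows "measure_pmf.prob (binomial_pmf 3 q) {j. 2 \<le> j} = 3 * q^2 - 2 * q^3"
proof -
  have "{j. 2 \<le> j} \<inter> set_pmf (binomial_pmf 3 q) = {2, 3::nat} \<inter> set_pmf (binomial_pmf 3 q)"
    using assms by (auto simp: set_pmf_binomial_eq split: if_splits)
  then have "measure_pmf.prob (binomial_pmf 3 q) {j. 2 \<le> j}
      = measure_pmf.prob (binomial_pmf 3 q) {2, 3}"
    by (metis measure_Int_set_pmf)
  also have "\<dots> = 3 * q^2 - 2 * q^3"
    using assms by (simp add: measure_measure_pmf_finite numeral_eq_Suc algebra_simps)
  finally show ?thesis .
qed

lemma max_bundle_revenue_gt: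
  fixes q :: real
  assumes "0 < q" "q \<le> 1"
  shows "1.8 * q < max (1 - (1 - q)^3) (2 * (3 * q^2 - 2 * q^3))"
proof (cases "q \<le> 9/20")
  case True
  have "1 - (1 - q)^3 - 1.8 * q = q * ((9 - 20 * q) * (5 - 2 * q) / 40 + (3 - 2 * q) / 40)"
    by (simp add: power2_eq_square power3_eq_cube field_simps)
  also have "\<dots> > 0"
    using True assms by (intro mult_pos_pos add_nonneg_pos) auto
  finally show ?thesis
    by (simp add: less_max_iff_disj)
next
  case False
  have "2 * (3 * q^2 - 2 * q^3) - 1.8 * q = q * ((20 * q - 9) * (21 - 20 * q) / 100 + 0.09)"
    by (simp add: power2_eq_square power3_eq_cube field_simps)
  also have "\<dots> > 0"
    using False assms by (intro mult_pos_pos add_nonneg_pos) auto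
  finally show ?thesis
    by (simp add: less_max_iff_disj)
qed

theorem lemma3:
  fixes c :: real
  assumes "0 < c" and "c \<le> 3"
  shows "BRev 3 (bern01 (c / 3)) / SRev 3 (bern01 (c / 3)) > 0.6"
proof -
  define q where "q = c / 3"
  have q: "0 < q" "q \<le> 1" "q \<in> {0..1}"
    using assms by (auto simp: q_def)
  have "1 - (1 - q)^3 \<le> BRev 3 (bern01 q)"
    using BRev_bern01_ge[OF q(3), of 1 3] prob_binomial_pos[OF q(3), of 3] by simp
  moreover have "2 * (3 * q^2 - 2 * q^3) \<le> BRev 3 (bern01 q)"
    using BRev_bern01_ge[OF q(3), of 2 3] prob_binomial_3_ge_2[OF q(3)] by simp
  ultimately have "1.8 * q < BRev 3 (bern01 q)"
    using max_bundle_revenue_gt[OF q(1,2)] by linarith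
  then show ?thesis
    using q by (simp add: SRev_bern01 q_def[symmetric] less_divide_eq)
qed

end
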